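(* There is a constant $\Delta_2>0$ (depending only on $r$) such that for every $\eta>0$ there is $\varepsilon_5=\varepsilon_5(\eta)>0$ with the following property: for all large enough $n$, every $m<\varepsilon_5 n$, every $U\subset V_n$ with $|U|=m$ and every $u\in(\eta,r]$ (with $\mathbb P(e(U,U^c)=u|U|)>0$), (i) $\mathbb P\big(|\partial U|\le(u-\eta)|U|\ \big|\ e(U,U^c)=u|U|\big)\le\exp(-\eta m\log(n/m)+\Delta_2 m)$; (ii) $\mathbb P\big(e(U,U^c)-|\partial U|>\eta|U|\big)\le\exp(-\eta m\log(n/m)+\Delta_2 m)$.
   Context: Fix an integer $r\ge3$, let $V_n=\{1,\dots,n\}$ with $rn$ even, and let $\mathbb P$ be the law of the random multigraph $G_n$ on $V_n$ obtained by giving each vertex $r$ half-edges and pairing all $rn$ half-edges uniformly at random. Write $y\sim x$ if $y$ and $x$ are joined by an edge of $G_n$. For $U\subset V_n$: $e(U,U^c)$ is the number of edges (pairs of matched half-edges) with one endpoint in $U$ and the other in $U^c$, and $\partial U:=\{y\in U^c: y\sim x\text{ for some }x\in U\}$. *)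

theory Defs
  imports Complex_Main
begin

text \<open>Configuration model: vertex v in {1..n} carries half-edges (v,i), i < r.
  A pairing is a partition of all half-edges into 2-element sets.\<close>

definition half_edges :: "nat \<Rightarrow> nat \<Rightarrow> (nat \<times> nat) set" where
  "half_edges r n = {1..n} \<times> {..<r}"

definition pairings :: "('a) set \<Rightarrow> 'a set set set" where
  "pairings H = {M. (\<forall>e\<in>M. \<exists>a b. e = {a, b} \<and> a \<noteq> b \<and> a \<in> H \<and> b \<in> H)
                   \<and> (\<forall>h\<in>H. \<exists>!e. e \<in> M \<and> h \<in> e)}"

definition cm_prob :: "nat \<Rightarrow> nat \<Rightarrow> ((nat \<times> nat) set set \<Rightarrow> bool) \<Rightarrow> real" where
  "cm_prob r n A = real (card {M \<in> pairings (half_edges r n). A M})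
                    / real (card (pairings (half_edges r n)))"

definition cm_cond_prob :: "nat \<Rightarrow> nat \<Rightarrow> ((nat \<times> nat) set set \<Rightarrow> bool)
      \<Rightarrow> ((nat \<times> nat) set set \<Rightarrow> bool) \<Rightarrow> real" where
  "cm_cond_prob r n A B = cm_prob r n (\<lambda>M. A M \<and> B M) / cm_prob r n B"

definition e_out :: "(nat \<times> nat) set set \<Rightarrow> nat set \<Rightarrow> nat" where
  "e_out M U = card {e \<in> M. \<exists>a b. e = {a, b} \<and> fst a \<in> U \<and> fst b \<notin> U}"

definition adj :: "(nat \<times> nat) set set \<Rightarrow> nat \<Rightarrow> nat \<Rightarrow> bool" where
  "adj M x y \<longleftrightarrow> (\<exists>e\<in>M. \<exists>a b. e = {a, b} \<and> fst a = x \<and> fst b = y)"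

definition vboundary :: "nat \<Rightarrow> (nat \<times> nat) set set \<Rightarrow> nat set \<Rightarrow> nat set" where
  "vboundary n M U = {y \<in> {1..n} - U. \<exists>x\<in>U. adj M y x}"

end

theory Submission
  imports Defs
begin

text \<open>Let \<open>B\<close> be the set of half-edges outside \<open>U\<close> that are matched into \<open>U\<close>. Then
  \<open>e(U, U\<^sup>c) = |B|\<close> and \<open>\<partial>U\<close> is the set of vertices carrying \<open>B\<close>. Permuting the half-edges
  outside \<open>U\<close> shows that, given \<open>|B| = k\<close>, \<open>B\<close> is a uniformly random \<open>k\<close>-subset of the
  \<open>r (n - m)\<close> outer half-edges. A \<open>k\<close>-subset spread over only \<open>j \<le> k - \<eta> m\<close> vertices lies in
  \<open>W \<times> [r]\<close> for one of the \<open>(n - m choose j)\<close> vertex sets \<open>W\<close>, and comparing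
  \<open>(n - m choose j) (r j choose k)\<close> with \<open>(r (n - m) choose k)\<close> leaves a factor \<open>(m / n)\<^bsup>\<eta> m\<^esup>\<close>
  up to \<open>e\<^bsup>O(m)\<^esup>\<close>. This is (i); summing over \<open>k \<le> r m\<close> gives (ii).\<close>

section \<open>Pairings\<close>

lemma pairings_edge:
  assumes "M \<in> pairings H" "e \<in> M"
  shows "\<exists>a b. e = {a, b} \<and> a \<noteq> b \<and> a \<in> H \<and> b \<in> H"
  using assms unfolding pairings_def by blast

lemma pairings_edge_subset: "M \<in> pairings H \<Longrightarrow> e \<in> M \<Longrightarrow> e \<subseteq> H"
  using pairings_edge by blast

lemma pairings_edge_unique:
  assumes "M \<in> pairings H" "e1 \<in> M" "e2 \<in> M" "x \<in> e1" "x \<in> e2"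
  shows "e1 = e2"
proof -
  have "x \<in> H" using pairings_edge_subset[OF assms(1,2)] assms(4) by blast
  then have "\<exists>!e. e \<in> M \<and> x \<in> e" using assms(1) unfolding pairings_def by blast
  then show ?thesis using assms by blast
qed

lemma pairings_subset_Pow_Pow: "pairings H \<subseteq> Pow (Pow H)"
  using pairings_edge_subset by blast

lemma finite_pairings: "finite H \<Longrightarrow> finite (pairings H)"
  by (meson finite_Pow_iff finite_subset pairings_subset_Pow_Pow)

lemma pairings_image_bij:
  assumes bij: "bij_betw \<pi> H H" and M: "M \<in> pairings H"
  shows "image \<pi> ` M \<in> pairings H"
proof -
  have inj: "inj_on \<pi> H" and img: "\<pi> ` H = H" using bij unfolding bij_betw_def by auto
  show ?thesis unfolding pairings_def
  proof (intro CollectI conjI ballI)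
    fix e' assume "e' \<in> image \<pi> ` M"
    then obtain e where e: "e \<in> M" "e' = \<pi> ` e" by blast
    then obtain a b where "e = {a, b}" "a \<noteq> b" "a \<in> H" "b \<in> H" using pairings_edge[OF M] by blast
    then show "\<exists>a b. e' = {a, b} \<and> a \<noteq> b \<and> a \<in> H \<and> b \<in> H"
      using e inj_onD[OF inj, of a b] img by (intro exI[of _ "\<pi> a"] exI[of _ "\<pi> b"]) auto
  next
    fix h assume "h \<in> H"
    then obtain h' where h': "h' \<in> H" "h = \<pi> h'" using img by blast
    then obtain e where e: "e \<in> M" "h' \<in> e" using M unfolding pairings_def by blast
    show "\<exists>!e'. e' \<in> image \<pi> ` M \<and> h \<in> e'"
    proof (rule ex1I[of _ "\<pi> ` e"])
      show "\<pi> ` e \<in> image \<pi> ` M \<and> h \<in> \<pi> ` e" using e h' by blast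
      fix f assume "f \<in> image \<pi> ` M \<and> h \<in> f"
      then obtain e2 x where e2: "e2 \<in> M" "f = \<pi> ` e2" "x \<in> e2" "h = \<pi> x" by blast
      have "x \<in> H" using pairings_edge_subset[OF M e2(1)] e2(3) by blast
      then have "x = h'" using inj_onD[OF inj, of x h'] h' e2(4) by simp
      then show "f = \<pi> ` e" using pairings_edge_unique[OF M e2(1) e(1)] e2 e by blast
    qed
  qed
qed

lemma inj_on_image_image_pairings:
  "inj_on \<pi> H \<Longrightarrow> inj_on (image (image \<pi>)) (pairings H)"
  by (meson inj_on_image_Pow inj_on_subset pairings_subset_Pow_Pow)

lemma finite_half_edges: "finite (half_edges r n)"
  unfolding half_edges_def by simp

section \<open>Half-edges matched into a vertex set\<close>

definition outer_half_edges :: "nat \<Rightarrow> nat \<Rightarrow> nat set \<Rightarrow> (nat \<times> nat) set" where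
  "outer_half_edges r n U = {h \<in> half_edges r n. fst h \<notin> U}"

definition boundary_half_edges ::
    "nat \<Rightarrow> nat \<Rightarrow> nat set \<Rightarrow> (nat \<times> nat) set set \<Rightarrow> (nat \<times> nat) set" where
  "boundary_half_edges r n U M = {b \<in> outer_half_edges r n U. \<exists>a. fst a \<in> U \<and> {a, b} \<in> M}"

lemma outer_half_edges_eq: "outer_half_edges r n U = ({1..n} - U) \<times> {..<r}"
  unfolding outer_half_edges_def half_edges_def by auto

lemma finite_outer_half_edges: "finite (outer_half_edges r n U)"
  unfolding outer_half_edges_eq by simp

lemma boundary_half_edges_subset: "boundary_half_edges r n U M \<subseteq> outer_half_edges r n U"
  unfolding boundary_half_edges_def by auto

lemma e_out_eq_card_boundary_half_edges:
  assumes M: "M \<in> pairings (half_edges r n)"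
  shows "e_out M U = card (boundary_half_edges r n U M)"
proof -
  define E where "E = {e \<in> M. \<exists>a b. e = {a, b} \<and> fst a \<in> U \<and> fst b \<notin> U}"
  define outer_end where "outer_end e = (SOME b. b \<in> e \<and> fst b \<notin> U)" for e :: "(nat \<times> nat) set"
  have outer_end: "outer_end {a, b} = b" if "fst a \<in> U" "fst b \<notin> U" for a b
  proof -
    have "outer_end {a, b} \<in> {a, b} \<and> fst (outer_end {a, b}) \<notin> U"
      unfolding outer_end_def by (rule someI_ex) (use that in blast)
    then show ?thesis using that by auto
  qed
  have "inj_on outer_end E"
  proof (rule inj_onI)
    fix e1 e2 assume "e1 \<in> E" "e2 \<in> E" "outer_end e1 = outer_end e2"
    then obtain a1 b1 a2 b2 where "e1 = {a1, b1}" "fst a1 \<in> U" "fst b1 \<notin> U"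
      "e2 = {a2, b2}" "fst a2 \<in> U" "fst b2 \<notin> U" "e1 \<in> M" "e2 \<in> M"
      unfolding E_def by blast
    then show "e1 = e2"
      using outer_end \<open>outer_end e1 = outer_end e2\<close> pairings_edge_unique[OF M] by (metis insertCI)
  qed
  moreover have "outer_end ` E = boundary_half_edges r n U M"
  proof
    show "outer_end ` E \<subseteq> boundary_half_edges r n U M"
    proof
      fix x assume "x \<in> outer_end ` E"
      then obtain a b where ab: "{a, b} \<in> M" "fst a \<in> U" "fst b \<notin> U" "x = b"
        unfolding E_def using outer_end by blast
      then have "b \<in> half_edges r n" using pairings_edge_subset[OF M] by blast
      then show "x \<in> boundary_half_edges r n U M"
        unfolding boundary_half_edges_def outer_half_edges_def using ab by blast
    qed
    show "boundary_half_edges r n U M \<subseteq> outer_end ` E"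
    proof
      fix b assume "b \<in> boundary_half_edges r n U M"
      then obtain a where "fst a \<in> U" "{a, b} \<in> M" "fst b \<notin> U"
        unfolding boundary_half_edges_def outer_half_edges_def by blast
      then have "{a, b} \<in> E" "outer_end {a, b} = b" unfolding E_def using outer_end by blast+
      then show "b \<in> outer_end ` E" by force
    qed
  qed
  ultimately show ?thesis unfolding e_out_def E_def[symmetric] by (metis card_image)
qed

lemma vboundary_eq_fst_boundary_half_edges:
  assumes M: "M \<in> pairings (half_edges r n)"
  shows "vboundary n M U = fst ` boundary_half_edges r n U M"
proof
  show "vboundary n M U \<subseteq> fst ` boundary_half_edges r n U M"
  proof
    fix y assume "y \<in> vboundary n M U"
    then obtain a b where h: "y \<notin> U" "fst b \<in> U" "{a, b} \<in> M" "fst a = y"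
      unfolding vboundary_def adj_def by blast
    moreover have "{b, a} \<in> M" using h by (simp add: insert_commute)
    ultimately have "a \<in> boundary_half_edges r n U M"
      using pairings_edge_subset[OF M h(3)]
      unfolding boundary_half_edges_def outer_half_edges_def by blast
    then show "y \<in> fst ` boundary_half_edges r n U M" using h by blast
  qed
  show "fst ` boundary_half_edges r n U M \<subseteq> vboundary n M U"
  proof
    fix y assume "y \<in> fst ` boundary_half_edges r n U M"
    then obtain a b where h: "y = fst b" "b \<in> half_edges r n" "fst b \<notin> U" "fst a \<in> U" "{a, b} \<in> M"
      unfolding boundary_half_edges_def outer_half_edges_def by blast
    then have "{b, a} \<in> M" by (simp add: insert_commute)
    then have "adj M y (fst a)" unfolding adj_def using h by blast
    then show "y \<in> vboundary n M U"
      unfolding vboundary_def using h by (auto simp: half_edges_def)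
  qed
qed

text \<open>Each boundary half-edge is matched to its own half-edge at a vertex of \<open>U\<close>.\<close>

lemma card_boundary_half_edges_le:
  assumes M: "M \<in> pairings (half_edges r n)" and U: "U \<subseteq> {1..n}"
  shows "card (boundary_half_edges r n U M) \<le> r * card U"
proof -
  let ?B = "boundary_half_edges r n U M"
  define partner where "partner b = (SOME a. fst a \<in> U \<and> {a, b} \<in> M)" for b :: "nat \<times> nat"
  have partner: "fst (partner b) \<in> U \<and> {partner b, b} \<in> M" if "b \<in> ?B" for b
    using that unfolding boundary_half_edges_def partner_def by (smt (verit, del_insts) mem_Collect_eq someI_ex)
  have "inj_on partner ?B"
  proof (rule inj_onI)
    fix b1 b2 assume b: "b1 \<in> ?B" "b2 \<in> ?B" "partner b1 = partner b2"
    have "{partner b1, b1} = {partner b2, b2}"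
      using pairings_edge_unique[OF M] partner b by (metis insertCI)
    moreover have "fst b1 \<notin> U" "fst b2 \<notin> U"
      using b unfolding boundary_half_edges_def outer_half_edges_def by auto
    ultimately show "b1 = b2" using partner b by (metis doubleton_eq_iff)
  qed
  moreover have "partner ` ?B \<subseteq> U \<times> {..<r}"
  proof
    fix x assume "x \<in> partner ` ?B"
    then obtain b where "b \<in> ?B" "x = partner b" by blast
    then have "fst x \<in> U" "x \<in> half_edges r n" using partner pairings_edge_subset[OF M] by blast+
    then show "x \<in> U \<times> {..<r}" unfolding half_edges_def by auto
  qed
  moreover have "finite (U \<times> {..<r})" using U finite_subset by auto
  ultimately have "card ?B \<le> card (U \<times> {..<r})" by (rule card_inj_on_le)
  then show ?thesis by (simp add: card_cartesian_product mult.commute)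
qed

section \<open>Symmetry under permutations of the outer half-edges\<close>

lemma boundary_half_edges_image:
  assumes bij: "bij_betw \<pi> (half_edges r n) (half_edges r n)"
    and side: "\<And>x. x \<in> half_edges r n \<Longrightarrow> fst (\<pi> x) \<in> U \<longleftrightarrow> fst x \<in> U"
    and M: "M \<in> pairings (half_edges r n)"
  shows "boundary_half_edges r n U (image \<pi> ` M) = \<pi> ` boundary_half_edges r n U M"
proof
  let ?H = "half_edges r n"
  show "boundary_half_edges r n U (image \<pi> ` M) \<subseteq> \<pi> ` boundary_half_edges r n U M"
  proof
    fix b' assume "b' \<in> boundary_half_edges r n U (image \<pi> ` M)"
    then obtain a' e where h: "b' \<in> ?H" "fst b' \<notin> U" "fst a' \<in> U" "e \<in> M" "{a', b'} = \<pi> ` e"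
      unfolding boundary_half_edges_def outer_half_edges_def by blast
    obtain x y where xy: "e = {x, y}" "x \<in> ?H" "y \<in> ?H" using pairings_edge[OF M h(4)] by blast
    have "a' \<noteq> b'" using h by auto
    then have "(a' = \<pi> x \<and> b' = \<pi> y) \<or> (a' = \<pi> y \<and> b' = \<pi> x)"
      using h(5) xy(1) by (auto simp: doubleton_eq_iff)
    then show "b' \<in> \<pi> ` boundary_half_edges r n U M"
    proof
      assume c: "a' = \<pi> x \<and> b' = \<pi> y"
      then have "y \<in> boundary_half_edges r n U M"
        using side xy h unfolding boundary_half_edges_def outer_half_edges_def by blast
      then show ?thesis using c by blast
    next
      assume c: "a' = \<pi> y \<and> b' = \<pi> x"
      have "{y, x} \<in> M" using xy h by (simp add: insert_commute)
      then have "x \<in> boundary_half_edges r n U M"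
        using side xy h c unfolding boundary_half_edges_def outer_half_edges_def by blast
      then show ?thesis using c by blast
    qed
  qed
  show "\<pi> ` boundary_half_edges r n U M \<subseteq> boundary_half_edges r n U (image \<pi> ` M)"
  proof
    fix z assume "z \<in> \<pi> ` boundary_half_edges r n U M"
    then obtain x y where h: "z = \<pi> y" "y \<in> ?H" "fst y \<notin> U" "fst x \<in> U" "{x, y} \<in> M"
      unfolding boundary_half_edges_def outer_half_edges_def by blast
    have "x \<in> ?H" using pairings_edge_subset[OF M h(5)] by blast
    moreover have "{\<pi> x, \<pi> y} \<in> image \<pi> ` M" using imageI[OF h(5), of "image \<pi>"] by simp
    moreover have "\<pi> y \<in> ?H" using bij_betwE[OF bij] h(2) by blast
    ultimately show "z \<in> boundary_half_edges r n U (image \<pi> ` M)"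
      using side h unfolding boundary_half_edges_def outer_half_edges_def by blast
  qed
qed

text \<open>The permutation of half-edges that carries \<open>B1\<close> onto \<open>B2\<close> and keeps every half-edge on
  its side of \<open>U\<close> maps the pairings with boundary \<open>B1\<close> injectively to those with boundary \<open>B2\<close>.\<close>

lemma card_boundary_fibre_le:
  assumes B1: "B1 \<subseteq> outer_half_edges r n U" and B2: "B2 \<subseteq> outer_half_edges r n U"
    and card: "card B1 = card B2"
  shows "card {M \<in> pairings (half_edges r n). boundary_half_edges r n U M = B1}
       \<le> card {M \<in> pairings (half_edges r n). boundary_half_edges r n U M = B2}"
proof -
  let ?H = "half_edges r n" and ?O = "outer_half_edges r n U"
  have O_sub: "?O \<subseteq> ?H" unfolding outer_half_edges_def by auto
  have fin: "finite ?O" "finite B1" "finite B2"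
    using finite_subset[OF B1] finite_subset[OF B2] finite_outer_half_edges by auto
  obtain f where f: "bij_betw f B1 B2" using finite_same_card_bij[OF fin(2,3) card] by blast
  have "card (?O - B1) = card (?O - B2)" using B1 B2 card fin by (simp add: card_Diff_subset)
  then obtain g where g: "bij_betw g (?O - B1) (?O - B2)" using finite_same_card_bij fin by blast
  define \<pi> where "\<pi> x = (if x \<in> B1 then f x else if x \<in> ?O then g x else x)" for x
  have \<pi>_B: "bij_betw \<pi> B1 B2"
    using f by (rule bij_betw_cong[THEN iffD1, rotated]) (simp add: \<pi>_def)
  have "bij_betw \<pi> (?O - B1) (?O - B2)"
    using g by (rule bij_betw_cong[THEN iffD1, rotated]) (simp add: \<pi>_def)
  then have "bij_betw \<pi> (B1 \<union> (?O - B1)) (B2 \<union> (?O - B2))"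
    by (rule bij_betw_combine[OF \<pi>_B]) blast
  then have \<pi>_O: "bij_betw \<pi> ?O ?O" using B1 B2 by (simp add: Un_absorb1 Un_Diff_cancel)
  have "bij_betw \<pi> (?H - ?O) (?H - ?O)"
    using B1 by (intro bij_betw_cong[THEN iffD1, OF _ bij_betw_id]) (auto simp: \<pi>_def)
  then have "bij_betw \<pi> (?O \<union> (?H - ?O)) (?O \<union> (?H - ?O))"
    by (rule bij_betw_combine[OF \<pi>_O]) blast
  then have bij: "bij_betw \<pi> ?H ?H" using O_sub by (simp add: Un_absorb1 Un_Diff_cancel)
  have side: "fst (\<pi> x) \<in> U \<longleftrightarrow> fst x \<in> U" if "x \<in> ?H" for x
  proof (cases "x \<in> ?O")
    case True
    then have "\<pi> x \<in> ?O" using \<pi>_O bij_betwE by blast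
    then show ?thesis using True unfolding outer_half_edges_def by auto
  next
    case False
    then show ?thesis using B1 by (auto simp: \<pi>_def)
  qed
  have "image (image \<pi>) ` {M \<in> pairings ?H. boundary_half_edges r n U M = B1}
      \<subseteq> {M \<in> pairings ?H. boundary_half_edges r n U M = B2}"
  proof
    fix M' assume "M' \<in> image (image \<pi>) ` {M \<in> pairings ?H. boundary_half_edges r n U M = B1}"
    then obtain M where M: "M \<in> pairings ?H" "boundary_half_edges r n U M = B1" "M' = image \<pi> ` M"
      by blast
    have "boundary_half_edges r n U M' = B2"
      using boundary_half_edges_image[OF bij side M(1)] M(2,3) \<pi>_B by (simp add: bij_betw_def)
    then show "M' \<in> {M \<in> pairings ?H. boundary_half_edges r n U M = B2}"
      using pairings_image_bij[OF bij M(1)] M(3) by simp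
  qed
  moreover have "inj_on (image (image \<pi>)) {M \<in> pairings ?H. boundary_half_edges r n U M = B1}"
    using bij unfolding bij_betw_def by (blast intro: inj_on_subset[OF inj_on_image_image_pairings])
  moreover have "finite {M \<in> pairings ?H. boundary_half_edges r n U M = B2}"
    using finite_pairings[OF finite_half_edges] by simp
  ultimately show ?thesis by (intro card_inj_on_le)
qed

text \<open>That is, conditionally on its size, the set of boundary half-edges is uniformly distributed.\<close>

lemma boundary_half_edges_uniform:
  "\<exists>c. \<forall>S \<subseteq> {B. B \<subseteq> outer_half_edges r n U \<and> card B = k}.
     card {M \<in> pairings (half_edges r n). boundary_half_edges r n U M \<in> S} = card S * c"
proof (cases "{B. B \<subseteq> outer_half_edges r n U \<and> card B = k} = {}")
  case True
  show ?thesis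
  proof (intro exI[of _ 0] allI impI)
    fix S assume "S \<subseteq> {B. B \<subseteq> outer_half_edges r n U \<and> card B = k}"
    then have "S = {}" using True by blast
    then show "card {M \<in> pairings (half_edges r n). boundary_half_edges r n U M \<in> S} = card S * 0"
      by simp
  qed
next
  case False
  let ?fibre = "\<lambda>B. {M \<in> pairings (half_edges r n). boundary_half_edges r n U M = B}"
  from False obtain B0 where B0: "B0 \<subseteq> outer_half_edges r n U" "card B0 = k" by blast
  have fibre: "card (?fibre B) = card (?fibre B0)"
    if "B \<subseteq> outer_half_edges r n U" "card B = k" for B
    using card_boundary_fibre_le[of B r n U B0] card_boundary_fibre_le[of B0 r n U B] that B0
    by simp
  show ?thesis
  proof (intro exI allI impI)
    fix S assume S: "S \<subseteq> {B. B \<subseteq> outer_half_edges r n U \<and> card B = k}"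
    then have "S \<subseteq> Pow (outer_half_edges r n U)" by blast
    then have "finite S" using finite_outer_half_edges by (simp add: finite_subset)
    have "{M \<in> pairings (half_edges r n). boundary_half_edges r n U M \<in> S} = (\<Union>B\<in>S. ?fibre B)"
      by blast
    also have "card \<dots> = (\<Sum>B\<in>S. card (?fibre B))"
      using \<open>finite S\<close> finite_pairings[OF finite_half_edges] by (intro card_UN_disjoint) auto
    also have "\<dots> = (\<Sum>B\<in>S. card (?fibre B0))"
      using S by (intro sum.cong refl fibre) auto
    also have "\<dots> = card S * card (?fibre B0)" by simp
    finally show "card {M \<in> pairings (half_edges r n). boundary_half_edges r n U M \<in> S}
        = card S * card (?fibre B0)" .
  qed
qed

lemma card_boundary_half_edges_in_le:
  fixes \<beta> :: real
  assumes Bad: "Bad \<subseteq> {B. B \<subseteq> outer_half_edges r n U \<and> card B = k}"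
    and card_Bad: "card Bad \<le> \<beta> * card {B. B \<subseteq> outer_half_edges r n U \<and> card B = k}"
  shows "card {M \<in> pairings (half_edges r n). boundary_half_edges r n U M \<in> Bad}
       \<le> \<beta> * card {M \<in> pairings (half_edges r n). card (boundary_half_edges r n U M) = k}"
proof -
  let ?All = "{B. B \<subseteq> outer_half_edges r n U \<and> card B = k}"
  obtain c where c: "\<And>S. S \<subseteq> ?All \<Longrightarrow>
      card {M \<in> pairings (half_edges r n). boundary_half_edges r n U M \<in> S} = card S * c"
    using boundary_half_edges_uniform by blast
  have "{M \<in> pairings (half_edges r n). card (boundary_half_edges r n U M) = k}
      = {M \<in> pairings (half_edges r n). boundary_half_edges r n U M \<in> ?All}"
    using boundary_half_edges_subset by blast
  then have "real (card {M \<in> pairings (half_edges r n). card (boundary_half_edges r n U M) = k})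
      = real (card ?All) * real c"
    using c[of ?All] by simp
  moreover have "real (card {M \<in> pairings (half_edges r n). boundary_half_edges r n U M \<in> Bad})
      = real (card Bad) * real c"
    using c[OF Bad] by simp
  ultimately show ?thesis
    using mult_right_mono[OF card_Bad, of "real c"] by (simp add: mult.assoc)
qed

section \<open>Counting sets of half-edges on few vertices\<close>

lemma binomial_mult_power_mono:
  fixes a b k :: nat
  assumes "a \<le> b"
  shows "(a choose k) * b ^ k \<le> (b choose k) * a ^ k"
proof (induction k)
  case 0
  then show ?case by simp
next
  case (Suc k)
  have a: "Suc k * (a choose Suc k) = (a - k) * (a choose k)"
    using binomial_absorption[of k a] binomial_absorb_comp[of a k] by simp
  have b: "Suc k * (b choose Suc k) = (b - k) * (b choose k)"
    using binomial_absorption[of k b] binomial_absorb_comp[of b k] by simp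
  have "(a - k) * b \<le> (b - k) * a"
    using assms by (simp add: diff_mult_distrib mult.commute[of b a] diff_le_mono2)
  have "Suc k * ((a choose Suc k) * b ^ Suc k) = ((a choose k) * b ^ k) * ((a - k) * b)"
    by (simp only: power_Suc2 mult.assoc[symmetric] a) (simp only: ac_simps)
  also have "\<dots> \<le> ((b choose k) * a ^ k) * ((b - k) * a)"
    using Suc.IH \<open>(a - k) * b \<le> (b - k) * a\<close> by (rule mult_mono) auto
  also have "\<dots> = Suc k * ((b choose Suc k) * a ^ Suc k)"
    by (simp only: power_Suc2 mult.assoc[symmetric] b) (simp only: ac_simps)
  finally have "Suc k * ((a choose Suc k) * b ^ Suc k) \<le> Suc k * ((b choose Suc k) * a ^ Suc k)" .
  then show ?case by (simp only: mult_le_cancel1)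
qed

lemma power_div_fact_le_exp:
  fixes x :: real
  assumes "0 \<le> x"
  shows "x ^ n / fact n \<le> exp x"
proof -
  have sums: "(\<lambda>k. x ^ k / fact k) sums exp x"
    using exp_converges[of x] by (simp add: divide_inverse_commute)
  have "(\<Sum>k\<in>{n}. x ^ k / fact k) \<le> (\<Sum>k. x ^ k / fact k)"
    using assms by (intro sum_le_suminf sums_summable[OF sums]) auto
  then show ?thesis using sums_unique[OF sums] by simp
qed

text \<open>A set \<open>B\<close> of \<open>k\<close> half-edges whose vertex set has \<open>j\<close> elements lies inside \<open>W \<times> {..<r}\<close>
  for one of the \<open>card V choose j\<close> sets \<open>W = fst ` B\<close>.\<close>

lemma card_subsets_small_shadow_le_sum:
  fixes V :: "'a set" and t :: real
  assumes V: "finite V"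
  shows "card {B. B \<subseteq> V \<times> {..<r} \<and> card B = k \<and> t \<le> real k - real (card (fst ` B))}
     \<le> (\<Sum>j\<in>{j\<in>{0..k}. t \<le> real k - real j}. (card V choose j) * (r * j choose k))"
proof -
  define J where "J = {j\<in>{0..k}. t \<le> real k - real j}"
  define S where "S j = (\<Union>W\<in>{W. W \<subseteq> V \<and> card W = j}. {B. B \<subseteq> W \<times> {..<r} \<and> card B = k})" for j
  have "{B. B \<subseteq> V \<times> {..<r} \<and> card B = k \<and> t \<le> real k - real (card (fst ` B))} \<subseteq> (\<Union>j\<in>J. S j)"
  proof
    fix B assume "B \<in> {B. B \<subseteq> V \<times> {..<r} \<and> card B = k \<and> t \<le> real k - real (card (fst ` B))}"
    then have B: "B \<subseteq> V \<times> {..<r}" "card B = k" "t \<le> real k - real (card (fst ` B))" by auto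
    have "card (fst ` B) \<le> k" using card_image_le[OF finite_subset[OF B(1)], of fst] B V by simp
    then have "card (fst ` B) \<in> J" unfolding J_def using B by simp
    moreover have "fst ` B \<subseteq> V" "B \<subseteq> fst ` B \<times> {..<r}" using B by force+
    ultimately show "B \<in> (\<Union>j\<in>J. S j)" unfolding S_def using B by blast
  qed
  moreover have "finite (\<Union>j\<in>J. S j)"
    using V unfolding S_def J_def by (auto intro: finite_subset[of _ "Pow (V \<times> {..<r})"])
  ultimately have "card {B. B \<subseteq> V \<times> {..<r} \<and> card B = k \<and> t \<le> real k - real (card (fst ` B))}
      \<le> card (\<Union>j\<in>J. S j)"
    by (rule card_mono[rotated])
  also have "\<dots> \<le> (\<Sum>j\<in>J. card (S j))"
    unfolding J_def by (intro card_UN_le) simp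
  also have "\<dots> \<le> (\<Sum>j\<in>J. (card V choose j) * (r * j choose k))"
  proof (rule sum_mono)
    fix j
    have "card (S j) \<le> (\<Sum>W\<in>{W. W \<subseteq> V \<and> card W = j}. card {B. B \<subseteq> W \<times> {..<r} \<and> card B = k})"
      unfolding S_def using V by (intro card_UN_le) simp
    also have "\<dots> = (\<Sum>W\<in>{W. W \<subseteq> V \<and> card W = j}. r * j choose k)"
    proof (rule sum.cong[OF refl])
      fix W assume W: "W \<in> {W. W \<subseteq> V \<and> card W = j}"
      then have "finite W" using V finite_subset by auto
      then show "card {B. B \<subseteq> W \<times> {..<r} \<and> card B = k} = r * j choose k"
        using W by (simp add: n_subsets card_cartesian_product mult.commute)
    qed
    also have "\<dots> = (card V choose j) * (r * j choose k)" using n_subsets[OF V] by simp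
    finally show "card (S j) \<le> (card V choose j) * (r * j choose k)" .
  qed
  finally show ?thesis unfolding J_def .
qed

lemma binomial_le_ratio_power:
  assumes "a \<le> b" "0 < b"
  shows "real (a choose k) \<le> real (b choose k) * (real a / real b) ^ k"
proof -
  have "real (a choose k) * real b ^ k \<le> real (b choose k) * real a ^ k"
    using binomial_mult_power_mono[OF assms(1)] by (metis of_nat_le_iff of_nat_mult of_nat_power)
  then show ?thesis using assms(2) by (simp add: power_divide field_simps)
qed

lemma binomial_le_power_div_fact: "real (n choose k) \<le> real n ^ k / fact k"
proof -
  have "real (n choose k) * fact k \<le> real n ^ k"
    using binomial_fact_pow[of n k] by (metis of_nat_fact of_nat_le_iff of_nat_mult of_nat_power)
  then show ?thesis by (simp add: field_simps)
qed

lemma shadow_surplus_le: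
  fixes \<eta> :: real
  assumes r: "r \<ge> 1" and m: "m \<ge> 1" "m \<le> n" and n': "n \<le> 2 * n'"
    and j: "real j \<le> real r * real m" and d: "\<eta> * real m \<le> real d" "d \<le> r * m"
  shows "(real j / real n') ^ d \<le> (2 * real r) ^ (r * m) * exp (- \<eta> * real m * ln (real n / real m))"
proof -
  have n_pos: "real n > 0" and n'_pos: "real n' > 0" using m n' by auto
  have "(real m / real n) ^ d = (real m / real n) powr (real d)"
    using m n_pos by (simp add: powr_realpow)
  also have "\<dots> \<le> (real m / real n) powr (\<eta> * real m)"
    using d m n_pos by (intro powr_mono') auto
  also have "\<dots> = exp (- \<eta> * real m * ln (real n / real m))"
    using m n_pos by (simp add: powr_def ln_div algebra_simps)
  finally have small: "(real m / real n) ^ d \<le> exp (- \<eta> * real m * ln (real n / real m))" .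
  have "real j / real n' \<le> real r * real m / real n'"
    using j n'_pos by (simp add: divide_right_mono)
  also have "\<dots> \<le> real r * real m / (real n / 2)"
    using n' n_pos by (intro divide_left_mono) auto
  also have "\<dots> = 2 * real r * (real m / real n)" by simp
  finally have "(real j / real n') ^ d \<le> (2 * real r * (real m / real n)) ^ d"
    by (rule power_mono) simp
  also have "\<dots> = (2 * real r) ^ d * (real m / real n) ^ d"
    by (rule power_mult_distrib)
  also have "\<dots> \<le> (2 * real r) ^ (r * m) * exp (- \<eta> * real m * ln (real n / real m))"
    using power_increasing[of d "r * m" "2 * real r"] r d small by (intro mult_mono) auto
  finally show ?thesis .
qed

text \<open>Choosing the \<open>k\<close> half-edges among only \<open>r j\<close> costs a factor \<open>(j/n')^k\<close>; against the
  \<open>n'^j / j!\<close> choices of the vertex set, the surplus \<open>k - j \<ge> \<eta> m\<close> of factors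
  \<open>j/n' = O(m/n)\<close> survives.\<close>

lemma binomial_small_shadow_term_le:
  fixes m n n' j k r :: nat and \<eta> :: real
  assumes r: "r \<ge> 1" and m: "m \<ge> 1" "m \<le> n" and n': "n \<le> 2 * n'"
    and jk: "j \<le> k" and km: "k \<le> r * m" and \<eta>: "\<eta> * real m \<le> real k - real j"
  shows "real (n' choose j) * real (r * j choose k)
     \<le> real (r * n' choose k) * (exp (real (r * m)) * (2 * real r) ^ (r * m)
          * exp (- \<eta> * real m * ln (real n / real m)))"
proof (cases "j \<le> n'")
  case False
  then show ?thesis by (simp add: binomial_eq_0)
next
  case True
  have n'_pos: "real n' > 0" using m n' by auto
  have j_le: "real j \<le> real (r * m)" using jk km by linarith
  have "real (r * j choose k) \<le> real (r * n' choose k) * (real (r * j) / real (r * n')) ^ k"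
    using True r n'_pos by (intro binomial_le_ratio_power) auto
  also have "real (r * j) / real (r * n') = real j / real n'" using r by simp
  finally have ratio: "real (r * j choose k) \<le> real (r * n' choose k) * (real j / real n') ^ k" .
  have split: "real n' ^ j / fact j * (real j / real n') ^ k
      = real j ^ j / fact j * (real j / real n') ^ (k - j)"
  proof -
    have "(real j / real n') ^ k = (real j / real n') ^ j * (real j / real n') ^ (k - j)"
      using jk by (metis le_add_diff_inverse power_add)
    moreover have "real n' ^ j * (real j / real n') ^ j = real j ^ j"
      using n'_pos by (simp add: power_divide)
    ultimately show ?thesis using n'_pos by (simp add: field_simps)
  qed
  have "real j ^ j / fact j \<le> exp (real j)" by (rule power_div_fact_le_exp) simp
  also have "\<dots> \<le> exp (real (r * m))" using j_le by simp
  finally have factorial: "real j ^ j / fact j \<le> exp (real (r * m))" .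
  have surplus: "(real j / real n') ^ (k - j)
      \<le> (2 * real r) ^ (r * m) * exp (- \<eta> * real m * ln (real n / real m))"
    using j_le jk km \<eta> by (intro shadow_surplus_le[OF r m n']) (auto simp: of_nat_diff)
  have "real (n' choose j) * real (r * j choose k)
      \<le> real n' ^ j / fact j * (real (r * n' choose k) * (real j / real n') ^ k)"
    using binomial_le_power_div_fact ratio by (rule mult_mono) auto
  also have "\<dots> = real (r * n' choose k) * (real j ^ j / fact j * (real j / real n') ^ (k - j))"
    using split by simp
  also have "\<dots> \<le> real (r * n' choose k) * (exp (real (r * m)) * ((2 * real r) ^ (r * m)
      * exp (- \<eta> * real m * ln (real n / real m))))"
    using factorial surplus by (intro mult_left_mono mult_mono) auto
  finally show ?thesis by (simp add: mult.assoc)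
qed

definition boundary_const :: "nat \<Rightarrow> real" where
  "boundary_const r = real r * (2 + ln (2 * real r))"

lemma boundary_const_pos: "r \<ge> 1 \<Longrightarrow> boundary_const r > 0"
  unfolding boundary_const_def by (intro mult_pos_pos add_pos_nonneg) auto

text \<open>The sum has at most \<open>k + 1 \<le> e^(r m)\<close> terms.\<close>

lemma card_subsets_small_shadow_le:
  fixes V :: "'a set" and \<eta> :: real
  assumes V: "finite V" and n: "n \<le> 2 * card V" and r: "r \<ge> 1" and m: "m \<ge> 1" "m \<le> n"
    and km: "k \<le> r * m"
  shows "real (card {B. B \<subseteq> V \<times> {..<r} \<and> card B = k \<and> \<eta> * real m \<le> real k - real (card (fst ` B))})
     \<le> real (r * card V choose k) * exp (- \<eta> * real m * ln (real n / real m) + boundary_const r * real m)"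
proof -
  define J where "J = {j\<in>{0..k}. \<eta> * real m \<le> real k - real j}"
  define \<gamma> where "\<gamma> = exp (real (r * m)) * (2 * real r) ^ (r * m) * exp (- \<eta> * real m * ln (real n / real m))"
  define C where "C = real (r * card V choose k)"
  have "real (card {B. B \<subseteq> V \<times> {..<r} \<and> card B = k \<and> \<eta> * real m \<le> real k - real (card (fst ` B))})
      \<le> (\<Sum>j\<in>J. real (card V choose j) * real (r * j choose k))"
    using card_subsets_small_shadow_le_sum[OF V, of r k "\<eta> * real m", folded J_def]
    by (metis (no_types, lifting) of_nat_le_iff of_nat_mult of_nat_sum sum.cong)
  also have "\<dots> \<le> (\<Sum>j\<in>J. C * \<gamma>)"
    unfolding C_def \<gamma>_def J_def
    by (intro sum_mono binomial_small_shadow_term_le[OF r m n _ km]) auto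
  also have "\<dots> = real (card J) * C * \<gamma>" by simp
  also have "\<dots> \<le> exp (real (r * m)) * C * \<gamma>"
  proof (intro mult_right_mono)
    have "card J \<le> card {0..k}" unfolding J_def by (intro card_mono) auto
    then have "card J \<le> r * m + 1" using km by simp
    then have "real (card J) \<le> real (r * m + 1)" by (simp only: of_nat_le_iff)
    also have "\<dots> \<le> exp (real (r * m))" using exp_ge_add_one_self[of "real (r * m)"] by simp
    finally show "real (card J) \<le> exp (real (r * m))" .
  qed (auto simp: C_def \<gamma>_def)
  also have "\<dots> = C * exp (- \<eta> * real m * ln (real n / real m) + boundary_const r * real m)"
  proof -
    have "exp (real (r * m) * ln (2 * real r)) = exp (ln (2 * real r)) ^ (r * m)"
      by (rule exp_of_nat_mult)
    also have "\<dots> = (2 * real r) ^ (r * m)" using r by simp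
    finally have "(2 * real r) ^ (r * m) = exp (real (r * m) * ln (2 * real r))" by (rule sym)
    then show ?thesis
      unfolding \<gamma>_def boundary_const_def by (simp add: exp_add[symmetric] algebra_simps)
  qed
  finally show ?thesis unfolding C_def .
qed

section \<open>Probability bounds\<close>

lemma cm_prob_le:
  fixes \<beta> :: real
  assumes "0 \<le> \<beta>" "card {M \<in> pairings (half_edges r n). A M} \<le> \<beta> * card (pairings (half_edges r n))"
  shows "cm_prob r n A \<le> \<beta>"
  using assms unfolding cm_prob_def
  by (cases "card (pairings (half_edges r n)) = 0") (auto simp: divide_le_eq)

lemma cm_cond_prob_le:
  fixes \<beta> :: real
  assumes "0 \<le> \<beta>"
    and "card {M \<in> pairings (half_edges r n). A M \<and> B M} \<le> \<beta> * card {M \<in> pairings (half_edges r n). B M}"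
  shows "cm_cond_prob r n A B \<le> \<beta>"
proof (cases "card (pairings (half_edges r n)) = 0 \<or> card {M \<in> pairings (half_edges r n). B M} = 0")
  case True
  then show ?thesis using assms(1) unfolding cm_cond_prob_def cm_prob_def by auto
next
  case False
  then show ?thesis using assms unfolding cm_cond_prob_def cm_prob_def by (simp add: divide_le_eq)
qed

lemma card_eq_sum_card_fibres:
  assumes "finite A" "finite T" "g ` A \<subseteq> T"
  shows "card A = (\<Sum>t\<in>T. card {x \<in> A. g x = t})"
  using sum.group[OF assms, of "\<lambda>_. 1 :: nat"] by simp

text \<open>For \<open>m = 0\<close> the bound is \<open>1\<close>, since \<open>0 * ln (n / 0) = 0\<close>.\<close>

lemma card_small_shadow_boundary_le:
  assumes r: "r \<ge> 1" and mn: "2 * m \<le> n" and U: "U \<subseteq> {1..n}" "card U = m" and km: "k \<le> r * m"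
  shows "card {M \<in> pairings (half_edges r n). card (boundary_half_edges r n U M) = k
                  \<and> \<eta> * real m \<le> real k - real (card (fst ` boundary_half_edges r n U M))}
    \<le> exp (- \<eta> * real m * ln (real n / real m) + boundary_const r * real m)
      * card {M \<in> pairings (half_edges r n). card (boundary_half_edges r n U M) = k}"
    (is "real (card ?S) \<le> _ * real (card ?T)")
proof (cases "m = 0")
  case True
  have "card ?S \<le> card ?T"
    using finite_pairings[OF finite_half_edges] by (intro card_mono) auto
  with True show ?thesis by simp
next
  case False
  define V where "V = {1..n} - U"
  have card_V: "card V = n - m" unfolding V_def using U by (simp add: card_Diff_subset finite_subset)
  define Bad where "Bad = {B. B \<subseteq> V \<times> {..<r} \<and> card B = k \<and> \<eta> * real m \<le> real k - real (card (fst ` B))}"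
  have outer: "outer_half_edges r n U = V \<times> {..<r}" unfolding V_def by (rule outer_half_edges_eq)
  have "card Bad \<le> exp (- \<eta> * real m * ln (real n / real m) + boundary_const r * real m)
      * card {B. B \<subseteq> outer_half_edges r n U \<and> card B = k}"
    using card_subsets_small_shadow_le[of V n r m k \<eta>] r False mn km card_V
    unfolding Bad_def outer by (simp add: n_subsets card_cartesian_product V_def mult.commute)
  then have "card {M \<in> pairings (half_edges r n). boundary_half_edges r n U M \<in> Bad}
      \<le> exp (- \<eta> * real m * ln (real n / real m) + boundary_const r * real m)
        * card {M \<in> pairings (half_edges r n). card (boundary_half_edges r n U M) = k}"
    by (intro card_boundary_half_edges_in_le) (auto simp: Bad_def outer)
  moreover have "{M \<in> pairings (half_edges r n). boundary_half_edges r n U M \<in> Bad}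
      = {M \<in> pairings (half_edges r n). card (boundary_half_edges r n U M) = k
           \<and> \<eta> * real m \<le> real k - real (card (fst ` boundary_half_edges r n U M))}"
    using boundary_half_edges_subset[of r n U] unfolding Bad_def outer by blast
  ultimately show ?thesis by simp
qed

lemma cm_cond_prob_small_vboundary_le:
  assumes r: "r \<ge> 1" and mn: "2 * m \<le> n" and U: "U \<subseteq> {1..n}" "card U = m"
  shows "cm_cond_prob r n (\<lambda>M. real (card (vboundary n M U)) \<le> (u - \<eta>) * real (card U))
                        (\<lambda>M. real (e_out M U) = u * real (card U))
    \<le> exp (- \<eta> * real m * ln (real n / real m) + boundary_const r * real m)"
proof (rule cm_cond_prob_le)
  let ?P = "pairings (half_edges r n)" and ?B = "boundary_half_edges r n U"
  let ?\<beta> = "exp (- \<eta> * real m * ln (real n / real m) + boundary_const r * real m)"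
  show "card {M \<in> ?P. real (card (vboundary n M U)) \<le> (u - \<eta>) * real (card U)
                        \<and> real (e_out M U) = u * real (card U)}
      \<le> ?\<beta> * card {M \<in> ?P. real (e_out M U) = u * real (card U)}"
  proof (cases "\<exists>M\<in>?P. real (e_out M U) = u * real (card U)")
    case True
    then obtain M0 where M0: "M0 \<in> ?P" "real (e_out M0 U) = u * real m" using U by auto
    define k where "k = e_out M0 U"
    have k: "real k = u * real m" and km: "k \<le> r * m"
      using M0 card_boundary_half_edges_le[OF M0(1) U(1)] U
      by (auto simp: k_def e_out_eq_card_boundary_half_edges)
    have e_out: "real (e_out M U) = u * real (card U) \<longleftrightarrow> card (?B M) = k" if "M \<in> ?P" for M
      using e_out_eq_card_boundary_half_edges[OF that] k U(2) by (metis of_nat_eq_iff)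
    have "{M \<in> ?P. real (card (vboundary n M U)) \<le> (u - \<eta>) * real (card U)
                   \<and> real (e_out M U) = u * real (card U)}
        = {M \<in> ?P. card (?B M) = k \<and> \<eta> * real m \<le> real k - real (card (fst ` ?B M))}"
      using e_out vboundary_eq_fst_boundary_half_edges k U(2) by (auto simp: algebra_simps)
    moreover have "{M \<in> ?P. real (e_out M U) = u * real (card U)} = {M \<in> ?P. card (?B M) = k}"
      using e_out by auto
    ultimately show ?thesis using card_small_shadow_boundary_le[OF r mn U km] by simp
  next
    case False
    then have "{M \<in> ?P. real (card (vboundary n M U)) \<le> (u - \<eta>) * real (card U)
                   \<and> real (e_out M U) = u * real (card U)} = {}" by auto
    then show ?thesis by (simp only: card.empty of_nat_0) simp
  qed
qed simp

lemma cm_prob_vboundary_deficit_le: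
  assumes r: "r \<ge> 1" and mn: "2 * m \<le> n" and U: "U \<subseteq> {1..n}" "card U = m"
  shows "cm_prob r n (\<lambda>M. real (e_out M U) - real (card (vboundary n M U)) > \<eta> * real (card U))
    \<le> exp (- \<eta> * real m * ln (real n / real m) + boundary_const r * real m)"
proof (rule cm_prob_le)
  let ?P = "pairings (half_edges r n)" and ?B = "boundary_half_edges r n U"
  let ?\<beta> = "exp (- \<eta> * real m * ln (real n / real m) + boundary_const r * real m)"
  let ?E = "{M \<in> ?P. real (e_out M U) - real (card (vboundary n M U)) > \<eta> * real (card U)}"
  have finite_P: "finite ?P" by (rule finite_pairings[OF finite_half_edges])
  have B_le: "card (?B M) \<in> {..r * m}" if "M \<in> ?P" for M
    using card_boundary_half_edges_le[OF that U(1)] U(2) by simp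
  have "card ?E = (\<Sum>k\<in>{..r * m}. card {M \<in> ?E. card (?B M) = k})"
    using finite_P B_le by (intro card_eq_sum_card_fibres) auto
  then have "real (card ?E) = (\<Sum>k\<in>{..r * m}. real (card {M \<in> ?E. card (?B M) = k}))"
    by simp
  also have "\<dots> \<le> (\<Sum>k\<in>{..r * m}. ?\<beta> * card {M \<in> ?P. card (?B M) = k})"
  proof (rule sum_mono)
    fix k assume "k \<in> {..r * m}"
    have "{M \<in> ?E. card (?B M) = k}
        \<subseteq> {M \<in> ?P. card (?B M) = k \<and> \<eta> * real m \<le> real k - real (card (fst ` ?B M))}"
      using e_out_eq_card_boundary_half_edges vboundary_eq_fst_boundary_half_edges U(2) by fastforce
    then have "card {M \<in> ?E. card (?B M) = k}
        \<le> card {M \<in> ?P. card (?B M) = k \<and> \<eta> * real m \<le> real k - real (card (fst ` ?B M))}"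
      using finite_P by (intro card_mono) auto
    then show "real (card {M \<in> ?E. card (?B M) = k}) \<le> ?\<beta> * card {M \<in> ?P. card (?B M) = k}"
      using card_small_shadow_boundary_le[OF r mn U, of k \<eta>] \<open>k \<in> {..r * m}\<close> by simp
  qed
  also have "\<dots> = ?\<beta> * card ?P"
  proof -
    have "card ?P = (\<Sum>k\<in>{..r * m}. card {M \<in> ?P. card (?B M) = k})"
      using finite_P B_le by (intro card_eq_sum_card_fibres) auto
    then show ?thesis by (simp add: sum_distrib_left)
  qed
  finally show "card ?E \<le> ?\<beta> * card ?P" .
qed simp

theorem lemma4:
  fixes r :: nat
  assumes "r \<ge> 3"
  shows "\<exists>\<Delta>2 > (0::real). \<forall>\<eta> > (0::real). \<exists>\<epsilon>5 > (0::real). \<exists>N::nat. \<forall>n \<ge> N. even (r * n) \<longrightarrow>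
    (\<forall>(m::nat) (U::nat set) (u::real).
       real m < \<epsilon>5 * real n \<longrightarrow> U \<subseteq> {1..n} \<longrightarrow> card U = m \<longrightarrow>
       \<eta> < u \<longrightarrow> u \<le> real r \<longrightarrow>
       cm_prob r n (\<lambda>M. real (e_out M U) = u * real (card U)) > 0 \<longrightarrow>
       cm_cond_prob r n (\<lambda>M. real (card (vboundary n M U)) \<le> (u - \<eta>) * real (card U))
                        (\<lambda>M. real (e_out M U) = u * real (card U))
         \<le> exp (- \<eta> * real m * ln (real n / real m) + \<Delta>2 * real m)
       \<and> cm_prob r n (\<lambda>M. real (e_out M U) - real (card (vboundary n M U)) > \<eta> * real (card U))
         \<le> exp (- \<eta> * real m * ln (real n / real m) + \<Delta>2 * real m))"
proof -
  have r: "r \<ge> 1" using assms by simp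
  have bounds:
    "cm_cond_prob r n (\<lambda>M. real (card (vboundary n M U)) \<le> (u - \<eta>) * real (card U))
                      (\<lambda>M. real (e_out M U) = u * real (card U))
       \<le> exp (- \<eta> * real m * ln (real n / real m) + boundary_const r * real m)
     \<and> cm_prob r n (\<lambda>M. real (e_out M U) - real (card (vboundary n M U)) > \<eta> * real (card U))
       \<le> exp (- \<eta> * real m * ln (real n / real m) + boundary_const r * real m)"
    if "real m < 1 / 2 * real n" "U \<subseteq> {1..n}" "card U = m" for \<eta> n m U u
  proof -
    have "2 * m \<le> n" using that(1) by linarith
    then show ?thesis
      using cm_cond_prob_small_vboundary_le[OF r] cm_prob_vboundary_deficit_le[OF r] that(2,3) by blast
  qed
  show ?thesis
    using boundary_const_pos[OF r] bounds
    by (intro exI[of _ "boundary_const r"] conjI allI impI exI[of _ "1 / 2"] exI[of _ 0]) auto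
qed

end
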